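(* Let $N\ge2$. If $\{|\psi_{ij}\rangle\}_{i,j=1}^N$ is a pair of orthogonal quantum Latin squares of size $N$, then $|\psi\rangle=\frac1N\sum_{i,j=1}^N|i\rangle|j\rangle|\psi_{ij}\rangle$ is an AME(4,$N$) state. Conversely, if $|\psi\rangle\in(\mathbb{C}^N)^{\otimes4}$ is an AME(4,$N$) state, then the vectors $|\psi_{ij}\rangle:=N(\langle i|\otimes\langle j|\otimes\mathbb{I}\otimes\mathbb{I})|\psi\rangle\in\mathbb{C}^N\otimes\mathbb{C}^N$ form a pair of orthogonal quantum Latin squares of size $N$ and $|\psi\rangle=\frac1N\sum_{ij}|i\rangle|j\rangle|\psi_{ij}\rangle$.
   Context: $\{|1\rangle,\dots,|N\rangle\}$ is the computational basis of $\mathbb{C}^N$. A pure state $|\psi\rangle\in(\mathbb{C}^N)^{\otimes4}$ on parties $A,B,C,D$ is absolutely maximally entangled, AME(4,$N$), if its reduced density matrix on every pair of parties equals $\mathbb{I}_{N^2}/N^2$. An $N\times N$ array $\{|\psi_{ij}\rangle\}$ of vectors in $\mathbb{C}^N\otimes\mathbb{C}^N$ is a pair of orthogonal quantum Latin squares (OQLS) of size $N$ if: (1) $\{|\psi_{ij}\rangle\}_{i,j}$ is an orthonormal basis of $\mathbb{C}^N\otimes\mathbb{C}^N$; (2) for each of the two tensor factors $X$ and all $j,k$: $\mathrm{Tr}_X\sum_i|\psi_{ji}\rangle\langle\psi_{ki}|=\delta_{jk}\mathbb{I}_N$; (3) for each of the two tensor factors $X$ and all $j,k$: $\mathrm{Tr}_X\sum_i|\psi_{ij}\rangle\langle\psi_{ik}|=\delta_{jk}\mathbb{I}_N$.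 *)

theory Defs
  imports Complex_Main
begin

text \<open>Computational basis indices are 0..N-1 (the paper's 1..N shifted).
 A vector in (C^N)^{tensor 4} is a function psi a b c d (indices < N relevant);
 a vector in C^N tensor C^N is a function v a b; an operator on C^N tensor C^N is
 a function M a b a' b' (matrix entry at row (a,b), column (a',b')).\<close>

definition ket :: "nat \<Rightarrow> nat \<Rightarrow> complex" where
  "ket i a = (if a = i then 1 else 0)"

definition rdm12 :: "nat \<Rightarrow> (nat \<Rightarrow> nat \<Rightarrow> nat \<Rightarrow> nat \<Rightarrow> complex) \<Rightarrow> nat \<Rightarrow> nat \<Rightarrow> nat \<Rightarrow> nat \<Rightarrow> complex" where
  "rdm12 N psi a b a' b' = (\<Sum>c<N. \<Sum>d<N. psi a b c d * cnj (psi a' b' c d))"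

definition maximally_mixed12 :: "nat \<Rightarrow> (nat \<Rightarrow> nat \<Rightarrow> nat \<Rightarrow> nat \<Rightarrow> complex) \<Rightarrow> bool" where
  "maximally_mixed12 N psi \<longleftrightarrow>
     (\<forall>a<N. \<forall>b<N. \<forall>a'<N. \<forall>b'<N.
        rdm12 N psi a b a' b' = (if a = a' \<and> b = b' then 1 / (of_nat N)^2 else 0))"

text \<open>AME(4,N): the reduced state on every pair of parties is I/N^2. Each pair is
 brought to the first two slots by reordering the parties.\<close>
definition AME4 :: "nat \<Rightarrow> (nat \<Rightarrow> nat \<Rightarrow> nat \<Rightarrow> nat \<Rightarrow> complex) \<Rightarrow> bool" where
  "AME4 N psi \<longleftrightarrow>
     maximally_mixed12 N psi \<comment> \<open>AB\<close>
   \<and> maximally_mixed12 N (\<lambda>a c b d. psi a b c d) \<comment> \<open>AC\<close>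
   \<and> maximally_mixed12 N (\<lambda>a d b c. psi a b c d) \<comment> \<open>AD\<close>
   \<and> maximally_mixed12 N (\<lambda>b c a d. psi a b c d) \<comment> \<open>BC\<close>
   \<and> maximally_mixed12 N (\<lambda>b d a c. psi a b c d) \<comment> \<open>BD\<close>
   \<and> maximally_mixed12 N (\<lambda>c d a b. psi a b c d) \<comment> \<open>CD\<close>"

definition outer :: "(nat \<Rightarrow> nat \<Rightarrow> complex) \<Rightarrow> (nat \<Rightarrow> nat \<Rightarrow> complex) \<Rightarrow> nat \<Rightarrow> nat \<Rightarrow> nat \<Rightarrow> nat \<Rightarrow> complex" where
  "outer v w a b a' b' = v a b * cnj (w a' b')"

definition ptrace1 :: "nat \<Rightarrow> (nat \<Rightarrow> nat \<Rightarrow> nat \<Rightarrow> nat \<Rightarrow> complex) \<Rightarrow> nat \<Rightarrow> nat \<Rightarrow> complex" where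
  "ptrace1 N M b b' = (\<Sum>a<N. M a b a b')"

definition ptrace2 :: "nat \<Rightarrow> (nat \<Rightarrow> nat \<Rightarrow> nat \<Rightarrow> nat \<Rightarrow> complex) \<Rightarrow> nat \<Rightarrow> nat \<Rightarrow> complex" where
  "ptrace2 N M a a' = (\<Sum>b<N. M a b a' b)"

definition inner2 :: "nat \<Rightarrow> (nat \<Rightarrow> nat \<Rightarrow> complex) \<Rightarrow> (nat \<Rightarrow> nat \<Rightarrow> complex) \<Rightarrow> complex" where
  "inner2 N v w = (\<Sum>a<N. \<Sum>b<N. cnj (v a b) * w a b)"

definition opsum :: "nat \<Rightarrow> (nat \<Rightarrow> nat \<Rightarrow> nat \<Rightarrow> nat \<Rightarrow> nat \<Rightarrow> complex) \<Rightarrow> nat \<Rightarrow> nat \<Rightarrow> nat \<Rightarrow> nat \<Rightarrow> complex" where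
  "opsum N F a b a' b' = (\<Sum>i<N. F i a b a' b')"

definition is_identity_N :: "nat \<Rightarrow> (nat \<Rightarrow> nat \<Rightarrow> complex) \<Rightarrow> bool" where
  "is_identity_N N A \<longleftrightarrow> (\<forall>x<N. \<forall>y<N. A x y = (if x = y then 1 else 0))"

definition is_zero_N :: "nat \<Rightarrow> (nat \<Rightarrow> nat \<Rightarrow> complex) \<Rightarrow> bool" where
  "is_zero_N N A \<longleftrightarrow> (\<forall>x<N. \<forall>y<N. A x y = 0)"

definition delta_id :: "nat \<Rightarrow> bool \<Rightarrow> (nat \<Rightarrow> nat \<Rightarrow> complex) \<Rightarrow> bool" where
  "delta_id N eq A \<longleftrightarrow> (if eq then is_identity_N N A else is_zero_N N A)"

text \<open>Pair of orthogonal quantum Latin squares; Psi i j is the vector psi_ij.\<close>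
definition OQLS :: "nat \<Rightarrow> (nat \<Rightarrow> nat \<Rightarrow> nat \<Rightarrow> nat \<Rightarrow> complex) \<Rightarrow> bool" where
  "OQLS N Psi \<longleftrightarrow>
     \<comment> \<open>(1) orthonormal basis of C^N tensor C^N\<close>
     (\<forall>i<N. \<forall>j<N. \<forall>k<N. \<forall>l<N.
        inner2 N (Psi i j) (Psi k l) = (if i = k \<and> j = l then 1 else 0))
   \<and> (\<forall>v :: nat \<Rightarrow> nat \<Rightarrow> complex. \<exists>c :: nat \<Rightarrow> nat \<Rightarrow> complex.
        \<forall>a<N. \<forall>b<N. v a b = (\<Sum>i<N. \<Sum>j<N. c i j * Psi i j a b))
     \<comment> \<open>(2) rows\<close>
   \<and> (\<forall>j<N. \<forall>k<N.
        delta_id N (j = k) (ptrace1 N (opsum N (\<lambda>i. outer (Psi j i) (Psi k i))))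
      \<and> delta_id N (j = k) (ptrace2 N (opsum N (\<lambda>i. outer (Psi j i) (Psi k i)))))
     \<comment> \<open>(3) columns\<close>
   \<and> (\<forall>j<N. \<forall>k<N.
        delta_id N (j = k) (ptrace1 N (opsum N (\<lambda>i. outer (Psi i j) (Psi i k))))
      \<and> delta_id N (j = k) (ptrace2 N (opsum N (\<lambda>i. outer (Psi i j) (Psi i k)))))"

definition state_of :: "nat \<Rightarrow> (nat \<Rightarrow> nat \<Rightarrow> nat \<Rightarrow> nat \<Rightarrow> complex) \<Rightarrow> nat \<Rightarrow> nat \<Rightarrow> nat \<Rightarrow> nat \<Rightarrow> complex" where
  "state_of N Psi a b c d = (1 / of_nat N) * (\<Sum>i<N. \<Sum>j<N. ket i a * ket j b * Psi i j c d)"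

definition squares_of :: "nat \<Rightarrow> (nat \<Rightarrow> nat \<Rightarrow> nat \<Rightarrow> nat \<Rightarrow> complex) \<Rightarrow> nat \<Rightarrow> nat \<Rightarrow> nat \<Rightarrow> nat \<Rightarrow> complex" where
  "squares_of N psi i j c d = of_nat N * (\<Sum>a<N. \<Sum>b<N. cnj (ket i a) * cnj (ket j b) * psi a b c d)"

end

theory Submission
  imports Defs
begin

text \<open>
  Multiplied by N, the state psi becomes the array of vectors psi_ij: both are the same
  four-index tensor T on the indices below N. The reduced state of psi on a pair of parties
  is I/N^2 exactly when T, read as an N^2 x N^2 matrix from that pair to the complementary
  one, is unitary; so psi is AME(4,N) iff T is unitary across all six cuts.
  The OQLS axioms are these six conditions: orthonormality is the cut AB|CD, the two partial
  traces of the row and column conditions are the cuts AC, AD, BC and BD, and for an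
  orthonormal family, spanning the space is equivalent to the completeness relation
  sum_ij |psi_ij><psi_ij| = I, which is the cut CD|AB.
\<close>

lemma sum_swap_pairs:
  "(\<Sum>a\<in>A. \<Sum>b\<in>B. \<Sum>i\<in>I. \<Sum>j\<in>J. f a b i j) = (\<Sum>i\<in>I. \<Sum>j\<in>J. \<Sum>a\<in>A. \<Sum>b\<in>B. f a b i j)"
proof -
  have "(\<Sum>a\<in>A. \<Sum>b\<in>B. \<Sum>i\<in>I. \<Sum>j\<in>J. f a b i j) = (\<Sum>a\<in>A. \<Sum>i\<in>I. \<Sum>j\<in>J. \<Sum>b\<in>B. f a b i j)"
    by (intro sum.cong refl) (simp add: sum.swap[of _ B])
  also have "\<dots> = (\<Sum>i\<in>I. \<Sum>j\<in>J. \<Sum>a\<in>A. \<Sum>b\<in>B. f a b i j)"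
    by (simp add: sum.swap[of _ A])
  finally show ?thesis .
qed

lemma sum_delta2:
  assumes "finite A" "finite B" "x \<in> A" "y \<in> B"
  shows "(\<Sum>a\<in>A. \<Sum>b\<in>B. if a = x \<and> b = y then g a b else 0) = g x y"
proof -
  have "(\<Sum>a\<in>A. \<Sum>b\<in>B. if a = x \<and> b = y then g a b else 0) = (\<Sum>a\<in>A. if a = x then g a y else 0)"
    using assms by (intro sum.cong refl) (simp add: sum.delta)
  then show ?thesis using assms by (simp add: sum.delta)
qed

lemma sum_ket: "a < N \<Longrightarrow> (\<Sum>i<N. ket i a * f i) = f a"
  unfolding ket_def by (simp add: of_bool_def[symmetric])

lemma cnj_ket: "cnj (ket i a) = ket a i"
  by (simp add: ket_def)

lemma state_of_eq: "a < N \<Longrightarrow> b < N \<Longrightarrow> state_of N Psi a b c d = Psi a b c d / of_nat N"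
  by (simp add: state_of_def mult.assoc sum_distrib_left[symmetric] sum_ket)

lemma squares_of_eq: "a < N \<Longrightarrow> b < N \<Longrightarrow> squares_of N psi a b c d = of_nat N * psi a b c d"
  by (simp add: squares_of_def cnj_ket mult.assoc sum_distrib_left[symmetric] sum_ket)

type_synonym tensor4 = "nat \<Rightarrow> nat \<Rightarrow> nat \<Rightarrow> nat \<Rightarrow> complex"

definition unitary12 :: "nat \<Rightarrow> tensor4 \<Rightarrow> bool" where
  "unitary12 N Phi \<longleftrightarrow>
     (\<forall>a<N. \<forall>b<N. \<forall>a'<N. \<forall>b'<N.
        rdm12 N Phi a b a' b' = (if a = a' \<and> b = b' then 1 else 0))"

definition perfect_tensor :: "nat \<Rightarrow> tensor4 \<Rightarrow> bool" where
  "perfect_tensor N Phi \<longleftrightarrow>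
     unitary12 N Phi
   \<and> unitary12 N (\<lambda>a c b d. Phi a b c d)
   \<and> unitary12 N (\<lambda>a d b c. Phi a b c d)
   \<and> unitary12 N (\<lambda>b c a d. Phi a b c d)
   \<and> unitary12 N (\<lambda>b d a c. Phi a b c d)
   \<and> unitary12 N (\<lambda>c d a b. Phi a b c d)"

lemma rdm12_scale:
  "rdm12 N (\<lambda>a b c d. k * Phi a b c d) a b a' b' = (k * cnj k) * rdm12 N Phi a b a' b'"
  by (simp add: rdm12_def sum_distrib_left mult_ac)

lemma maximally_mixed12_iff_unitary12:
  assumes "N > 0"
  shows "maximally_mixed12 N psi \<longleftrightarrow> unitary12 N (\<lambda>a b c d. of_nat N * psi a b c d)"
proof -
  have "rdm12 N psi a b a' b' = (if Q then 1 / (of_nat N)^2 else 0) \<longleftrightarrow>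
        rdm12 N (\<lambda>a b c d. of_nat N * psi a b c d) a b a' b' = (if Q then 1 else 0)"
    for a b a' b' Q
    using assms by (auto simp: rdm12_scale power2_eq_square field_simps)
  then show ?thesis
    unfolding maximally_mixed12_def unitary12_def by simp
qed

lemma AME4_iff_perfect_tensor:
  assumes "N > 0"
  shows "AME4 N psi \<longleftrightarrow> perfect_tensor N (\<lambda>a b c d. of_nat N * psi a b c d)"
  using assms by (simp add: AME4_def perfect_tensor_def maximally_mixed12_iff_unitary12)

lemma unitary12_cong:
  assumes "\<And>a b c d. a < N \<Longrightarrow> b < N \<Longrightarrow> c < N \<Longrightarrow> d < N \<Longrightarrow> Phi a b c d = Phi' a b c d"
  shows "unitary12 N Phi \<longleftrightarrow> unitary12 N Phi'"
  using assms by (simp add: unitary12_def rdm12_def)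

lemma perfect_tensor_cong:
  assumes "\<And>a b c d. a < N \<Longrightarrow> b < N \<Longrightarrow> c < N \<Longrightarrow> d < N \<Longrightarrow> Phi a b c d = Phi' a b c d"
  shows "perfect_tensor N Phi \<longleftrightarrow> perfect_tensor N Phi'"
  unfolding perfect_tensor_def by (intro conj_cong unitary12_cong) (simp_all add: assms)





lemma rdm12_eq_inner2: "rdm12 N Psi a b a' b' = inner2 N (Psi a' b') (Psi a b)"
  by (simp add: rdm12_def inner2_def mult.commute)

lemma orthonormal_iff_unitary12:
  "(\<forall>i<N. \<forall>j<N. \<forall>k<N. \<forall>l<N. inner2 N (Psi i j) (Psi k l) = (if i = k \<and> j = l then 1 else 0))
   \<longleftrightarrow> unitary12 N Psi"
  unfolding unitary12_def rdm12_eq_inner2 by (intro iffI allI impI; simp; metis)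

lemma orthonormal_expansion_coeff:
  assumes "unitary12 N Psi" "p < N" "q < N"
    and expansion: "\<And>a b. a < N \<Longrightarrow> b < N \<Longrightarrow> v a b = (\<Sum>i<N. \<Sum>j<N. k i j * Psi i j a b)"
  shows "k p q = inner2 N (Psi p q) v"
proof -
  have "inner2 N (Psi p q) v = (\<Sum>a<N. \<Sum>b<N. \<Sum>i<N. \<Sum>j<N. k i j * (cnj (Psi p q a b) * Psi i j a b))"
    by (simp add: inner2_def expansion sum_distrib_left mult_ac)
  also have "\<dots> = (\<Sum>i<N. \<Sum>j<N. k i j * rdm12 N Psi i j p q)"
    by (subst sum_swap_pairs) (simp add: rdm12_def sum_distrib_left mult_ac)
  also have "\<dots> = (\<Sum>i<N. \<Sum>j<N. if i = p \<and> j = q then k i j else 0)"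
    using assms(1,2,3) by (intro sum.cong refl) (simp add: unitary12_def)
  also have "\<dots> = k p q"
    using assms(2,3) by (simp add: sum_delta2)
  finally show ?thesis by simp
qed

lemma unitary12_transpose_if_spanning:
  assumes "unitary12 N Psi"
    and spanning: "\<forall>v. \<exists>k. \<forall>a<N. \<forall>b<N. v a b = (\<Sum>i<N. \<Sum>j<N. k i j * Psi i j a b)"
  shows "unitary12 N (\<lambda>c d a b. Psi a b c d)"
  unfolding unitary12_def
proof (intro allI impI)
  fix c d c' d' assume cd: "c < N" "d < N" "c' < N" "d' < N"
  define v where "v a b = (if a = c' \<and> b = d' then 1 else 0 :: complex)" for a b
  obtain k where k: "\<forall>a<N. \<forall>b<N. v a b = (\<Sum>i<N. \<Sum>j<N. k i j * Psi i j a b)"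
    using spanning by blast
  have k_eq: "k p q = cnj (Psi p q c' d')" if "p < N" "q < N" for p q
  proof -
    have "k p q = inner2 N (Psi p q) v"
      using assms(1) that k by (intro orthonormal_expansion_coeff) auto
    also have "\<dots> = (\<Sum>a<N. \<Sum>b<N. if a = c' \<and> b = d' then cnj (Psi p q a b) else 0)"
      unfolding inner2_def by (intro sum.cong refl) (simp add: v_def)
    also have "\<dots> = cnj (Psi p q c' d')"
      using cd by (simp add: sum_delta2)
    finally show ?thesis .
  qed
  have "v c d = (\<Sum>i<N. \<Sum>j<N. Psi i j c d * cnj (Psi i j c' d'))"
    using k cd by (simp add: k_eq mult.commute)
  then show "rdm12 N (\<lambda>c d a b. Psi a b c d) c d c' d' = (if c = c' \<and> d = d' then 1 else 0)"
    by (simp add: rdm12_def v_def)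
qed

lemma spanning_if_unitary12_transpose:
  assumes "unitary12 N (\<lambda>c d a b. Psi a b c d)"
  shows "\<forall>v. \<exists>k. \<forall>a<N. \<forall>b<N. v a b = (\<Sum>i<N. \<Sum>j<N. k i j * Psi i j a b)"
proof (intro allI exI impI)
  fix v :: "nat \<Rightarrow> nat \<Rightarrow> complex" and x y assume xy: "x < N" "y < N"
  have "(\<Sum>i<N. \<Sum>j<N. inner2 N (Psi i j) v * Psi i j x y)
      = (\<Sum>i<N. \<Sum>j<N. \<Sum>a<N. \<Sum>b<N. v a b * (Psi i j x y * cnj (Psi i j a b)))"
    by (simp add: inner2_def sum_distrib_left sum_distrib_right mult_ac)
  also have "\<dots> = (\<Sum>a<N. \<Sum>b<N. v a b * rdm12 N (\<lambda>c d a b. Psi a b c d) x y a b)"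
    by (subst sum_swap_pairs) (simp add: rdm12_def sum_distrib_left)
  also have "\<dots> = (\<Sum>a<N. \<Sum>b<N. if a = x \<and> b = y then v a b else 0)"
    using assms xy by (intro sum.cong refl) (auto simp: unitary12_def)
  also have "\<dots> = v x y"
    using xy by (simp add: sum_delta2)
  finally show "v x y = (\<Sum>i<N. \<Sum>j<N. inner2 N (Psi i j) v * Psi i j x y)" by simp
qed

lemma delta_id_iff:
  "delta_id N e A \<longleftrightarrow> (\<forall>x<N. \<forall>y<N. A x y = (if e \<and> x = y then 1 else 0))"
  by (cases e) (auto simp: delta_id_def is_identity_N_def is_zero_N_def)

lemma delta_id_rdm12_iff_unitary12:
  "(\<forall>j<N. \<forall>k<N. delta_id N (j = k) (\<lambda>x y. rdm12 N Phi j x k y)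
                \<and> delta_id N (j = k) (\<lambda>x y. rdm12 N Phi' j x k y))
   \<longleftrightarrow> unitary12 N Phi \<and> unitary12 N Phi'"
  unfolding delta_id_iff unitary12_def by auto

lemma ptrace_rows_eq_rdm12:
  "ptrace1 N (opsum N (\<lambda>i. outer (Psi j i) (Psi k i))) = (\<lambda>x y. rdm12 N (\<lambda>a d b c. Psi a b c d) j x k y)"
  "ptrace2 N (opsum N (\<lambda>i. outer (Psi j i) (Psi k i))) = (\<lambda>x y. rdm12 N (\<lambda>a c b d. Psi a b c d) j x k y)"
  unfolding ptrace1_def ptrace2_def opsum_def outer_def rdm12_def by (rule ext, rule ext, rule sum.swap)+

lemma ptrace_cols_eq_rdm12:
  "ptrace1 N (opsum N (\<lambda>i. outer (Psi i j) (Psi i k))) = (\<lambda>x y. rdm12 N (\<lambda>b d a c. Psi a b c d) j x k y)"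
  "ptrace2 N (opsum N (\<lambda>i. outer (Psi i j) (Psi i k))) = (\<lambda>x y. rdm12 N (\<lambda>b c a d. Psi a b c d) j x k y)"
  unfolding ptrace1_def ptrace2_def opsum_def outer_def rdm12_def by (rule ext, rule ext, rule sum.swap)+

lemma OQLS_iff_perfect_tensor: "OQLS N Psi \<longleftrightarrow> perfect_tensor N Psi"
  unfolding OQLS_def perfect_tensor_def orthonormal_iff_unitary12
    ptrace_rows_eq_rdm12 ptrace_cols_eq_rdm12 delta_id_rdm12_iff_unitary12
  using unitary12_transpose_if_spanning[of N Psi] spanning_if_unitary12_transpose[of N Psi] by blast

lemma AME4_state_of_iff_OQLS:
  assumes "N > 0"
  shows "AME4 N (state_of N Psi) \<longleftrightarrow> OQLS N Psi"
proof -
  have "perfect_tensor N (\<lambda>a b c d. of_nat N * state_of N Psi a b c d) \<longleftrightarrow> perfect_tensor N Psi"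
    using assms by (intro perfect_tensor_cong) (simp add: state_of_eq)
  then show ?thesis
    using assms by (simp add: AME4_iff_perfect_tensor OQLS_iff_perfect_tensor)
qed

lemma OQLS_squares_of_iff_AME4:
  assumes "N > 0"
  shows "OQLS N (squares_of N psi) \<longleftrightarrow> AME4 N psi"
proof -
  have "perfect_tensor N (squares_of N psi) \<longleftrightarrow> perfect_tensor N (\<lambda>a b c d. of_nat N * psi a b c d)"
    by (intro perfect_tensor_cong) (simp add: squares_of_eq)
  then show ?thesis
    using assms by (simp add: AME4_iff_perfect_tensor OQLS_iff_perfect_tensor)
qed

lemma state_of_squares_of:
  "N > 0 \<Longrightarrow> a < N \<Longrightarrow> b < N \<Longrightarrow> state_of N (squares_of N psi) a b c d = psi a b c d"
  by (simp add: state_of_eq squares_of_eq)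

theorem mainTheorem12:
  fixes N :: nat
  assumes "N \<ge> 2"
  shows "(\<forall>Psi. OQLS N Psi \<longrightarrow> AME4 N (state_of N Psi))
       \<and> (\<forall>psi. AME4 N psi \<longrightarrow>
            OQLS N (squares_of N psi)
          \<and> (\<forall>a<N. \<forall>b<N. \<forall>c<N. \<forall>d<N. psi a b c d = state_of N (squares_of N psi) a b c d))"
proof -
  have "N > 0" using assms by simp
  then show ?thesis
    by (simp add: AME4_state_of_iff_OQLS OQLS_squares_of_iff_AME4 state_of_squares_of)
qed

end
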